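(* Let $k$ be an infinite field, $n\ge 1$, and let $k\subset E$ be a finite Galois extension with Galois group $G_{E/k}=\mathrm{Gal}(E|k)$. Let $P\subset \mathbb{P}^n(E)$ be a set of $n+1$ distinct points which is stable under the natural action of $G_{E/k}$ (so $P$ is a $G_{E/k}$-set). Then there exists a set $Q\subset\mathbb{P}^n(E)$ of $n+1$ points, not all lying on a common hyperplane (i.e. in general linear position), which is stable under $G_{E/k}$ and isomorphic to $P$ as a $G_{E/k}$-set.
   Context: $G_{E/k}$ acts on $\mathbb{P}^n(E)$ coordinatewise. *)

theory Defs
  imports Main
begin

text \<open>The field E is the type 'e; the base field k is a subset K of it.\<close>

definition subfield :: "'e::field set \<Rightarrow> bool" where
  "subfield K \<longleftrightarrow> 0 \<in> K \<and> 1 \<in> K \<and>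
     (\<forall>x\<in>K. \<forall>y\<in>K. x + y \<in> K \<and> x * y \<in> K) \<and>
     (\<forall>x\<in>K. - x \<in> K \<and> inverse x \<in> K)"

definition finite_ext :: "'e::field set \<Rightarrow> bool" where
  "finite_ext K \<longleftrightarrow> (\<exists>B. finite B \<and>
     (\<forall>x. \<exists>c. (\<forall>b\<in>B. c b \<in> K) \<and> x = (\<Sum>b\<in>B. c b * b)))"

definition field_aut :: "('e::field \<Rightarrow> 'e) \<Rightarrow> bool" where
  "field_aut \<sigma> \<longleftrightarrow> bij \<sigma> \<and> (\<forall>x y. \<sigma> (x + y) = \<sigma> x + \<sigma> y \<and> \<sigma> (x * y) = \<sigma> x * \<sigma> y)"

definition Gal :: "'e::field set \<Rightarrow> ('e \<Rightarrow> 'e) set" where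
  "Gal K = {\<sigma>. field_aut \<sigma> \<and> (\<forall>x\<in>K. \<sigma> x = x)}"

text \<open>Finite Galois extension (Artin): finite, and the fixed field of Gal(E|K) is K.\<close>
definition finite_galois :: "'e::field set \<Rightarrow> bool" where
  "finite_galois K \<longleftrightarrow> subfield K \<and> finite_ext K \<and>
     {x. \<forall>\<sigma>\<in>Gal K. \<sigma> x = x} = K"

text \<open>Vectors in E^(n+1): coordinates 0..n, zero beyond.\<close>
definition vecs :: "nat \<Rightarrow> (nat \<Rightarrow> 'e::field) set" where
  "vecs n = {v. \<forall>i>n. v i = 0}"

definition proj_pt :: "(nat \<Rightarrow> 'e::field) \<Rightarrow> (nat \<Rightarrow> 'e) set" where
  "proj_pt v = {(\<lambda>i. c * v i) | c. c \<noteq> 0}"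

definition Proj :: "nat \<Rightarrow> (nat \<Rightarrow> 'e::field) set set" where
  "Proj n = {proj_pt v | v. v \<in> vecs n \<and> (\<exists>i. v i \<noteq> 0)}"

definition act :: "('e::field \<Rightarrow> 'e) \<Rightarrow> (nat \<Rightarrow> 'e) set \<Rightarrow> (nat \<Rightarrow> 'e) set" where
  "act \<sigma> p = (\<lambda>v i. \<sigma> (v i)) ` p"

definition G_stable :: "('e::field \<Rightarrow> 'e) set \<Rightarrow> (nat \<Rightarrow> 'e) set set \<Rightarrow> bool" where
  "G_stable G P \<longleftrightarrow> (\<forall>\<sigma>\<in>G. \<forall>p\<in>P. act \<sigma> p \<in> P)"

definition G_iso :: "('e::field \<Rightarrow> 'e) set \<Rightarrow> (nat \<Rightarrow> 'e) set set \<Rightarrow> (nat \<Rightarrow> 'e) set set \<Rightarrow> bool" where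
  "G_iso G P Q \<longleftrightarrow> (\<exists>f. bij_betw f P Q \<and> (\<forall>\<sigma>\<in>G. \<forall>p\<in>P. f (act \<sigma> p) = act \<sigma> (f p)))"

definition on_common_hyperplane :: "nat \<Rightarrow> (nat \<Rightarrow> 'e::field) set set \<Rightarrow> bool" where
  "on_common_hyperplane n Q \<longleftrightarrow> (\<exists>a::nat \<Rightarrow> 'e. (\<exists>i\<le>n. a i \<noteq> 0) \<and>
     (\<forall>q\<in>Q. \<forall>v\<in>q. (\<Sum>i\<le>n. a i * v i) = 0))"

end

theory Submission
  imports Defs "HOL-Computational_Algebra.Polynomial"
begin

text \<open>
  Choose a canonical representative of each point of P (first nonzero coordinate 1) and
  evaluate its coordinates as the coefficients of a polynomial at some x \<in> k. Since k is
  infinite, x can avoid the finitely many roots of the differences of these polynomials,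
  so this yields an injective map \<alpha> : P \<rightarrow> E, and \<alpha>(\<sigma> p) = \<sigma>(\<alpha> p) because \<sigma> fixes x and
  commutes with normalisation. Sending p to the point (1 : \<alpha> p : ... : \<alpha> p^n) of the moment
  curve is then an injective morphism of G-sets, and n + 1 distinct points of the moment
  curve lie on no hyperplane, since a nonzero polynomial of degree at most n has at most n
  roots.
\<close>

lemma
  fixes c :: "nat \<Rightarrow> 'a::idom"
  assumes "\<exists>i\<le>n. c i \<noteq> 0"
  shows finite_zeros_power_sum: "finite {x. (\<Sum>i\<le>n. c i * x ^ i) = 0}"
    and card_zeros_power_sum_le: "card {x. (\<Sum>i\<le>n. c i * x ^ i) = 0} \<le> n"
proof -
  define p where "p = (\<Sum>i\<le>n. monom (c i) i)"
  have poly_p: "poly p x = (\<Sum>i\<le>n. c i * x ^ i)" for x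
    unfolding p_def poly_sum by (simp add: poly_monom)
  obtain i where i: "i \<le> n" "c i \<noteq> 0" using assms by blast
  have "coeff p i = c i" unfolding p_def using i(1) by (rule coeff_sum_monom)
  hence "p \<noteq> 0" using i by auto
  moreover have "degree p \<le> n" unfolding p_def
    by (rule degree_sum_le) (auto intro: order_trans[OF degree_monom_le])
  ultimately show "finite {x. (\<Sum>i\<le>n. c i * x ^ i) = 0}"
    and "card {x. (\<Sum>i\<le>n. c i * x ^ i) = 0} \<le> n"
    using poly_roots_finite card_poly_roots_bound by (fastforce simp: poly_p)+
qed

lemma infinite_imp_separating_point:
  fixes K :: "'e::field set"
  assumes "infinite K" and "finite V" and "V \<subseteq> vecs n"
  shows "\<exists>x\<in>K. inj_on (\<lambda>v. \<Sum>i\<le>n. v i * x ^ i) V"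
proof -
  define bad where
    "bad = (\<Union>(v, w)\<in>{(v, w). v \<in> V \<and> w \<in> V \<and> v \<noteq> w}.
              {x. (\<Sum>i\<le>n. (v i - w i) * x ^ i) = 0})"
  have "finite {(v, w). v \<in> V \<and> w \<in> V \<and> v \<noteq> w}"
    by (rule finite_subset[of _ "V \<times> V"]) (use assms(2) in auto)
  moreover have "finite {x. (\<Sum>i\<le>n. (v i - w i) * x ^ i) = 0}"
    if "v \<in> V" "w \<in> V" "v \<noteq> w" for v w
  proof (rule finite_zeros_power_sum)
    obtain i where i: "v i \<noteq> w i" using \<open>v \<noteq> w\<close> by auto
    have "v \<in> vecs n" "w \<in> vecs n" using that(1,2) assms(3) by auto
    hence "i \<le> n" using i by (cases "i \<le> n") (auto simp: vecs_def)
    with i show "\<exists>i\<le>n. v i - w i \<noteq> 0" by auto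
  qed
  ultimately have "finite bad" unfolding bad_def by auto
  hence "infinite (K - bad)" using assms(1) by (simp add: Diff_infinite_finite)
  then obtain x where x: "x \<in> K" "x \<notin> bad" by (blast dest: infinite_imp_nonempty)
  have "inj_on (\<lambda>v. \<Sum>i\<le>n. v i * x ^ i) V"
  proof (rule inj_onI, rule ccontr)
    fix v w assume "v \<in> V" "w \<in> V" "v \<noteq> w"
      and "(\<Sum>i\<le>n. v i * x ^ i) = (\<Sum>i\<le>n. w i * x ^ i)"
    hence "x \<in> bad"
      unfolding bad_def by (auto simp: left_diff_distrib sum_subtractf)
    with x(2) show False ..
  qed
  with x(1) show ?thesis ..
qed

context
  fixes \<sigma> :: "'e::field \<Rightarrow> 'e"
  assumes aut: "field_aut \<sigma>"
begin

lemma field_aut_add: "\<sigma> (x + y) = \<sigma> x + \<sigma> y"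
  and field_aut_mult: "\<sigma> (x * y) = \<sigma> x * \<sigma> y"
  using aut unfolding field_aut_def by auto

lemma field_aut_0: "\<sigma> 0 = 0"
proof -
  have "\<sigma> 0 + \<sigma> 0 = \<sigma> 0 + 0" using field_aut_add[of 0 0] by simp
  thus ?thesis by (rule add_left_imp_eq)
qed

lemma field_aut_eq_0_iff: "\<sigma> x = 0 \<longleftrightarrow> x = 0"
  using aut field_aut_0 unfolding field_aut_def bij_def by (metis injD)

lemma field_aut_1: "\<sigma> 1 = 1"
  using field_aut_mult[of 1 1] field_aut_eq_0_iff[of 1] by simp

lemma field_aut_inverse: "\<sigma> (inverse x) = inverse (\<sigma> x)"
proof (cases "x = 0")
  case False
  hence "\<sigma> x * \<sigma> (inverse x) = 1"
    by (simp flip: field_aut_mult add: field_aut_1)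
  thus ?thesis by (rule inverse_unique[symmetric])
qed (simp add: field_aut_0)

lemma field_aut_divide: "\<sigma> (x / y) = \<sigma> x / \<sigma> y"
  by (simp add: divide_inverse field_aut_mult field_aut_inverse)

lemma field_aut_power: "\<sigma> (x ^ k) = \<sigma> x ^ k"
  by (induction k) (simp_all add: field_aut_1 field_aut_mult)

lemma field_aut_sum: "\<sigma> (\<Sum>i\<in>A. f i) = (\<Sum>i\<in>A. \<sigma> (f i))"
  by (induction A rule: infinite_finite_induct) (simp_all add: field_aut_0 field_aut_add)

lemma act_proj_pt: "act \<sigma> (proj_pt v) = proj_pt (\<lambda>i. \<sigma> (v i))"
proof
  show "act \<sigma> (proj_pt v) \<subseteq> proj_pt (\<lambda>i. \<sigma> (v i))"
    unfolding act_def proj_pt_def by (auto simp: field_aut_mult field_aut_eq_0_iff)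
  show "proj_pt (\<lambda>i. \<sigma> (v i)) \<subseteq> act \<sigma> (proj_pt v)"
  proof
    fix u assume "u \<in> proj_pt (\<lambda>i. \<sigma> (v i))"
    then obtain d where d: "d \<noteq> 0" "u = (\<lambda>i. d * \<sigma> (v i))" unfolding proj_pt_def by auto
    have "surj \<sigma>" using aut by (simp add: field_aut_def bij_is_surj)
    then obtain c where c: "d = \<sigma> c" by (blast dest: surjD)
    have "c \<noteq> 0" using d(1) c field_aut_0 by auto
    moreover have "u = (\<lambda>i. \<sigma> (c * v i))" using d(2) c by (simp add: field_aut_mult)
    ultimately show "u \<in> act \<sigma> (proj_pt v)"
      unfolding act_def proj_pt_def by (intro image_eqI[of _ _ "\<lambda>i. c * v i"]) auto
  qed
qed

end

lemma in_proj_pt_self: "v \<in> proj_pt v"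
  unfolding proj_pt_def by (auto intro: exI[of _ 1])

lemma proj_pt_scale:
  fixes c :: "'e::field"
  assumes "c \<noteq> 0"
  shows "proj_pt (\<lambda>i. c * v i) = proj_pt v"
proof -
  have "(\<exists>d. d \<noteq> 0 \<and> u = (\<lambda>i. d * (c * v i))) \<longleftrightarrow> (\<exists>e. e \<noteq> 0 \<and> u = (\<lambda>i. e * v i))"
    for u
  proof
    assume "\<exists>d. d \<noteq> 0 \<and> u = (\<lambda>i. d * (c * v i))"
    then obtain d where "d \<noteq> 0" "u = (\<lambda>i. (d * c) * v i)" by (auto simp: mult.assoc)
    thus "\<exists>e. e \<noteq> 0 \<and> u = (\<lambda>i. e * v i)" using assms by (intro exI[of _ "d * c"]) simp
  next
    assume "\<exists>e. e \<noteq> 0 \<and> u = (\<lambda>i. e * v i)"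
    then obtain e where "e \<noteq> 0" "u = (\<lambda>i. (e / c) * (c * v i))" using assms by auto
    thus "\<exists>d. d \<noteq> 0 \<and> u = (\<lambda>i. d * (c * v i))" using assms by (intro exI[of _ "e / c"]) simp
  qed
  thus ?thesis unfolding proj_pt_def by blast
qed

definition normalize_vec :: "(nat \<Rightarrow> 'e::field) \<Rightarrow> nat \<Rightarrow> 'e" where
  "normalize_vec v = (\<lambda>i. v i / v (LEAST j. v j \<noteq> 0))"

definition proj_rep :: "(nat \<Rightarrow> 'e::field) set \<Rightarrow> nat \<Rightarrow> 'e" where
  "proj_rep p = normalize_vec (SOME v. v \<in> p)"

lemma normalize_vec_scale:
  fixes c :: "'e::field"
  assumes "c \<noteq> 0"
  shows "normalize_vec (\<lambda>i. c * v i) = normalize_vec v"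
  using assms by (simp add: normalize_vec_def)

lemma proj_pt_normalize_vec:
  fixes v :: "nat \<Rightarrow> 'e::field"
  assumes "\<exists>i. v i \<noteq> 0"
  shows "proj_pt (normalize_vec v) = proj_pt v"
proof -
  have "v (LEAST j. v j \<noteq> 0) \<noteq> 0" using assms by (rule LeastI_ex)
  moreover have "normalize_vec v = (\<lambda>i. inverse (v (LEAST j. v j \<noteq> 0)) * v i)"
    unfolding normalize_vec_def by (simp add: fun_eq_iff field_simps)
  ultimately show ?thesis by (simp add: proj_pt_scale)
qed

lemma normalize_vec_aut:
  assumes "field_aut \<sigma>"
  shows "normalize_vec (\<lambda>i. \<sigma> (v i)) = (\<lambda>i. \<sigma> (normalize_vec v i))"
  by (simp add: normalize_vec_def field_aut_divide[OF assms] field_aut_eq_0_iff[OF assms])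

lemma proj_rep_proj_pt: "proj_rep (proj_pt v) = normalize_vec v"
proof -
  have "(SOME u. u \<in> proj_pt v) \<in> proj_pt v"
    by (rule someI[where P = "\<lambda>u. u \<in> proj_pt v", OF in_proj_pt_self])
  then obtain c where "c \<noteq> 0" "(SOME u. u \<in> proj_pt v) = (\<lambda>i. c * v i)"
    unfolding proj_pt_def by blast
  thus ?thesis unfolding proj_rep_def by (simp add: normalize_vec_scale)
qed

lemma proj_rep_in_vecs: "p \<in> Proj n \<Longrightarrow> proj_rep p \<in> vecs n"
  by (auto simp: Proj_def vecs_def proj_rep_proj_pt normalize_vec_def)

lemma inj_on_proj_rep: "inj_on (proj_rep :: (nat \<Rightarrow> 'e::field) set \<Rightarrow> _) (Proj n)"
proof (rule inj_onI)
  fix p q :: "(nat \<Rightarrow> 'e) set" assume "p \<in> Proj n" "q \<in> Proj n" and eq: "proj_rep p = proj_rep q"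
  then obtain v w where "p = proj_pt v" "\<exists>i. v i \<noteq> 0" "q = proj_pt w" "\<exists>i. w i \<noteq> 0"
    unfolding Proj_def by blast
  moreover from this eq have "normalize_vec v = normalize_vec w" by (simp add: proj_rep_proj_pt)
  ultimately show "p = q" by (metis proj_pt_normalize_vec)
qed

lemma proj_rep_act:
  assumes "field_aut \<sigma>" and "p \<in> Proj n"
  shows "proj_rep (act \<sigma> p) = (\<lambda>i. \<sigma> (proj_rep p i))"
  using assms(2) unfolding Proj_def
  by (auto simp: act_proj_pt[OF assms(1)] proj_rep_proj_pt normalize_vec_aut[OF assms(1)])

lemma exists_inj_equivariant_coordinate:
  fixes K :: "'e::field set"
  assumes "infinite K" and "finite P" and "P \<subseteq> Proj n"
  shows "\<exists>\<alpha>. inj_on \<alpha> P \<and> (\<forall>\<sigma>\<in>Gal K. \<forall>p\<in>P. \<alpha> (act \<sigma> p) = \<sigma> (\<alpha> p))"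
proof -
  have "proj_rep ` P \<subseteq> vecs n" using assms(3) proj_rep_in_vecs by blast
  then obtain x where x: "x \<in> K" and inj: "inj_on (\<lambda>v. \<Sum>i\<le>n. v i * x ^ i) (proj_rep ` P)"
    using infinite_imp_separating_point assms(1,2) by blast
  define \<alpha> where "\<alpha> p = (\<Sum>i\<le>n. proj_rep p i * x ^ i)" for p
  have "\<alpha> = (\<lambda>v. \<Sum>i\<le>n. v i * x ^ i) \<circ> proj_rep" by (simp add: \<alpha>_def fun_eq_iff)
  hence "inj_on \<alpha> P"
    using comp_inj_on[OF inj_on_subset[OF inj_on_proj_rep assms(3)] inj] by simp
  moreover have "\<alpha> (act \<sigma> p) = \<sigma> (\<alpha> p)" if "\<sigma> \<in> Gal K" "p \<in> P" for \<sigma> p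
  proof -
    have "field_aut \<sigma>" and "\<sigma> x = x" using that(1) x unfolding Gal_def by auto
    thus ?thesis using that(2) assms(3) unfolding \<alpha>_def
      by (auto simp: proj_rep_act field_aut_sum field_aut_mult field_aut_power)
  qed
  ultimately show ?thesis by blast
qed

definition moment_pt :: "nat \<Rightarrow> 'e::field \<Rightarrow> (nat \<Rightarrow> 'e) set" where
  "moment_pt n a = proj_pt (\<lambda>i. if i \<le> n then a ^ i else 0)"

lemma moment_pt_in_Proj: "moment_pt n a \<in> Proj n"
  unfolding moment_pt_def Proj_def vecs_def by (auto intro!: exI[of _ 0])

lemma inj_moment_pt:
  assumes "n \<ge> 1"
  shows "inj (moment_pt n :: 'e::field \<Rightarrow> _)"
proof (rule injI)
  fix a b :: 'e assume "moment_pt n a = moment_pt n b"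
  hence "(\<lambda>i. if i \<le> n then a ^ i else 0) \<in> moment_pt n b"
    unfolding moment_pt_def using in_proj_pt_self by metis
  then obtain c where c: "(\<lambda>i. if i \<le> n then a ^ i else 0) = (\<lambda>i. c * (if i \<le> n then b ^ i else 0))"
    unfolding moment_pt_def proj_pt_def by auto
  from fun_cong[OF c, of 0] fun_cong[OF c, of 1] show "a = b" using assms by simp
qed

lemma act_moment_pt:
  assumes "field_aut \<sigma>"
  shows "act \<sigma> (moment_pt n a) = moment_pt n (\<sigma> a)"
proof -
  have "(\<lambda>i. \<sigma> (if i \<le> n then a ^ i else 0)) = (\<lambda>i. if i \<le> n then \<sigma> a ^ i else 0)"
    using field_aut_power[OF assms] field_aut_0[OF assms] by auto
  thus ?thesis unfolding moment_pt_def act_proj_pt[OF assms] by simp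
qed

lemma moment_pts_not_on_common_hyperplane:
  assumes "finite A" and "card A > n"
  shows "\<not> on_common_hyperplane n (moment_pt n ` A)"
proof
  assume "on_common_hyperplane n (moment_pt n ` A)"
  then obtain c where c: "\<exists>i\<le>n. c i \<noteq> 0"
    and on: "\<forall>q\<in>moment_pt n ` A. \<forall>v\<in>q. (\<Sum>i\<le>n. c i * v i) = 0"
    unfolding on_common_hyperplane_def by blast
  have "A \<subseteq> {x. (\<Sum>i\<le>n. c i * x ^ i) = 0}"
    using on in_proj_pt_self unfolding moment_pt_def by fastforce
  hence "card A \<le> card {x. (\<Sum>i\<le>n. c i * x ^ i) = 0}"
    using finite_zeros_power_sum[OF c] by (rule card_mono[rotated])
  also have "\<dots> \<le> n" using c by (rule card_zeros_power_sum_le)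
  finally show False using assms(2) by simp
qed

lemma G_stable_image:
  assumes "G_stable G P" and "\<forall>\<sigma>\<in>G. \<forall>p\<in>P. f (act \<sigma> p) = act \<sigma> (f p)"
  shows "G_stable G (f ` P)"
  unfolding G_stable_def
proof (intro ballI)
  fix \<sigma> q assume "\<sigma> \<in> G" "q \<in> f ` P"
  then obtain p where "p \<in> P" "q = f p" by blast
  with \<open>\<sigma> \<in> G\<close> assms show "act \<sigma> q \<in> f ` P"
    unfolding G_stable_def by (metis imageI)
qed

lemma G_iso_image:
  assumes "inj_on f P" and "\<forall>\<sigma>\<in>G. \<forall>p\<in>P. f (act \<sigma> p) = act \<sigma> (f p)"
  shows "G_iso G P (f ` P)"
  using assms unfolding G_iso_def bij_betw_def by blast

theorem lemma4p1:
  fixes K :: "'e::field set" and n :: nat and P :: "(nat \<Rightarrow> 'e) set set"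
  assumes "infinite K"
    and "finite_galois K"
    and "n \<ge> 1"
    and "P \<subseteq> Proj n" and "card P = n + 1"
    and "G_stable (Gal K) P"
  shows "\<exists>Q. Q \<subseteq> Proj n \<and> card Q = n + 1 \<and> \<not> on_common_hyperplane n Q
           \<and> G_stable (Gal K) Q \<and> G_iso (Gal K) P Q"
proof -
  have "finite P" using assms(5) by (intro card_ge_0_finite) simp
  then obtain \<alpha> where inj: "inj_on \<alpha> P" and equiv: "\<forall>\<sigma>\<in>Gal K. \<forall>p\<in>P. \<alpha> (act \<sigma> p) = \<sigma> (\<alpha> p)"
    using exists_inj_equivariant_coordinate[OF assms(1) _ assms(4)] by blast
  define f where "f = moment_pt n \<circ> \<alpha>"
  have inj_f: "inj_on f P"
    unfolding f_def
    using comp_inj_on[OF inj inj_on_subset[OF inj_moment_pt[OF assms(3)] subset_UNIV]] .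
  have equiv_f: "\<forall>\<sigma>\<in>Gal K. \<forall>p\<in>P. f (act \<sigma> p) = act \<sigma> (f p)"
  proof (intro ballI)
    fix \<sigma> p assume "\<sigma> \<in> Gal K" "p \<in> P"
    hence "field_aut \<sigma>" and "\<alpha> (act \<sigma> p) = \<sigma> (\<alpha> p)" using equiv by (auto simp: Gal_def)
    thus "f (act \<sigma> p) = act \<sigma> (f p)" by (simp add: f_def act_moment_pt)
  qed
  have "card (\<alpha> ` P) = n + 1" using card_image[OF inj] assms(5) by simp
  hence "\<not> on_common_hyperplane n (moment_pt n ` \<alpha> ` P)"
    using moment_pts_not_on_common_hyperplane[of "\<alpha> ` P" n] \<open>finite P\<close> by simp
  hence "\<not> on_common_hyperplane n (f ` P)" by (simp add: f_def image_comp)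
  moreover have "f ` P \<subseteq> Proj n" by (auto simp: f_def moment_pt_in_Proj)
  moreover have "card (f ` P) = n + 1" using card_image[OF inj_f] assms(5) by simp
  ultimately show ?thesis
    using G_stable_image[OF assms(6) equiv_f] G_iso_image[OF inj_f equiv_f]
    by (intro exI[of _ "f ` P"]) simp
qed

end
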